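(* $S\mathbb{R}^{n\times n\times p}_+=(S\mathbb{R}^{n\times n\times p}_+)^*$, where the dual cone is taken in the space $S\mathbb{R}^{n\times n\times p}$ with respect to the inner product $\langle\cdot,\cdot\rangle$, i.e. $(S\mathbb{R}^{n\times n\times p}_+)^*=\{\mathcal{B}\in S\mathbb{R}^{n\times n\times p}:\langle\mathcal{A},\mathcal{B}\rangle\ge0\ \text{for all}\ \mathcal{A}\in S\mathbb{R}^{n\times n\times p}_+\}$.
   Context: For $\mathcal{A}\in\mathbb{R}^{m\times n\times p}$ let $A^{(k)}\in\mathbb{R}^{m\times n}$ ($k\in[p]$) be its frontal slices, $(A^{(k)})_{ij}=a_{ijk}$. $\mathrm{bcirc}(\mathcal{A})\in\mathbb{R}^{mp\times np}$ is the block circulant matrix whose $(i,j)$ block ($i,j\in[p]$) is $A^{(((i-j)\bmod p)+1)}$. $\mathrm{unfold}(\mathcal{A})$ stacks $A^{(1)},\dots,A^{(p)}$ vertically, $\mathrm{fold}$ is its inverse, and the T-product is $\mathcal{A}*\mathcal{B}=\mathrm{fold}(\mathrm{bcirc}(\mathcal{A})\,\mathrm{unfold}(\mathcal{B}))$. The transpose $\mathcal{A}^\top$ has frontal slices $(A^{(1)})^\top,(A^{(p)})^\top,\dots,(A^{(2)})^\top$; $S\mathbb{R}^{n\times n\times p}$ is the set of $\mathcal{A}\in\mathbb{R}^{n\times n\times p}$ with $\mathcal{A}^\top=\mathcal{A}$. The inner product is $\langle\mathcal{A},\mathcal{B}\rangle=\sum a_{ijk}b_{ijk}$. $S\mathbb{R}^{n\times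 n\times p}_+$ is the set of symmetric T-positive semidefinite tensors: $\mathcal{A}\in S\mathbb{R}^{n\times n\times p}$ with $\langle\mathcal{X},\mathcal{A}*\mathcal{X}\rangle\ge0$ for all $\mathcal{X}\in\mathbb{R}^{n\times1\times p}$. *)

theory Defs
  imports Complex_Main
begin

text \<open>Third-order real tensors of size m x n x p are represented as functions
  nat => nat => nat => real with 0-based indices (i < m, j < n, k < p), required
  to vanish outside this index box.
  Frontal slice k (1-based in the paper) is the 0-based slice k-1.\<close>

type_synonym tensor = "nat \<Rightarrow> nat \<Rightarrow> nat \<Rightarrow> real"
type_synonym mat = "nat \<Rightarrow> nat \<Rightarrow> real"

definition tvalid :: "nat \<Rightarrow> nat \<Rightarrow> nat \<Rightarrow> tensor \<Rightarrow> bool" where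
  "tvalid m n p A \<longleftrightarrow> (\<forall>i j k. \<not> (i < m \<and> j < n \<and> k < p) \<longrightarrow> A i j k = 0)"

text \<open>bcirc: (mp) x (np) matrix whose (i,j) block (0-based) is frontal slice (i - j) mod p.\<close>
definition bcirc :: "nat \<Rightarrow> nat \<Rightarrow> nat \<Rightarrow> tensor \<Rightarrow> mat" where
  "bcirc m n p A = (\<lambda>r c. if r < m * p \<and> c < n * p
      then A (r mod m) (c mod n) ((r div m + p - c div n) mod p) else 0)"

definition unfold :: "nat \<Rightarrow> nat \<Rightarrow> nat \<Rightarrow> tensor \<Rightarrow> mat" where
  "unfold n l p B = (\<lambda>r c. if r < n * p \<and> c < l then B (r mod n) c (r div n) else 0)"

definition fold :: "nat \<Rightarrow> nat \<Rightarrow> nat \<Rightarrow> mat \<Rightarrow> tensor" where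
  "fold m l p M = (\<lambda>i j k. if i < m \<and> j < l \<and> k < p then M (k * m + i) j else 0)"

definition matmul :: "nat \<Rightarrow> mat \<Rightarrow> mat \<Rightarrow> mat" where
  "matmul q M N = (\<lambda>r c. \<Sum>s<q. M r s * N s c)"

definition tprod :: "nat \<Rightarrow> nat \<Rightarrow> nat \<Rightarrow> nat \<Rightarrow> tensor \<Rightarrow> tensor \<Rightarrow> tensor" where
  "tprod m n l p A B = fold m l p (matmul (n * p) (bcirc m n p A) (unfold n l p B))"

text \<open>Tensor transpose of an m x n x p tensor (result n x m x p): slices
  (A1)^T, (Ap)^T, ..., (A2)^T.\<close>
definition ttrans :: "nat \<Rightarrow> nat \<Rightarrow> nat \<Rightarrow> tensor \<Rightarrow> tensor" where
  "ttrans m n p A = (\<lambda>i j k. if i < n \<and> j < m \<and> k < p then A j i ((p - k) mod p) else 0)"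

definition tinner :: "nat \<Rightarrow> nat \<Rightarrow> nat \<Rightarrow> tensor \<Rightarrow> tensor \<Rightarrow> real" where
  "tinner m n p A B = (\<Sum>i<m. \<Sum>j<n. \<Sum>k<p. A i j k * B i j k)"

definition symT :: "nat \<Rightarrow> nat \<Rightarrow> tensor set" where
  "symT n p = {A. tvalid n n p A \<and> ttrans n n p A = A}"

definition psdT :: "nat \<Rightarrow> nat \<Rightarrow> tensor set" where
  "psdT n p = {A \<in> symT n p. \<forall>X. tvalid n 1 p X \<longrightarrow> tinner n 1 p X (tprod n n 1 p A X) \<ge> 0}"

definition dualT :: "nat \<Rightarrow> nat \<Rightarrow> tensor set \<Rightarrow> tensor set" where
  "dualT n p K = {B \<in> symT n p. \<forall>A \<in> K. tinner n n p A B \<ge> 0}"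

end

theory Submission
  imports Defs
begin

text \<open>Index the entries of an n x 1 x p tensor X by pairs (i, k). Then the pairing of X with
  A * X is the quadratic form of the np x np matrix C_A with entries A_ij^((k - l) mod p), so A
  is T-positive semidefinite iff C_A is positive semidefinite; moreover the Frobenius product
  of C_A and C_B is p times the pairing of A and B. Hence the cone lies in its dual because the
  cone of positive semidefinite matrices is self-dual: such a matrix is a Gram matrix (split
  off one rank-one term at a time by Schur complements), so its Frobenius product with a
  positive semidefinite matrix is a sum of values of a nonnegative quadratic form. Conversely,
  the pairing of X with B * X equals the pairing of X * X^T with B, and X * X^T is
  T-positive semidefinite because C_(X * X^T) is the Gram matrix of the cyclic shifts of X.\<close>

definition quad_form :: "'a set \<Rightarrow> ('a \<Rightarrow> 'a \<Rightarrow> real) \<Rightarrow> ('a \<Rightarrow> real) \<Rightarrow> real" where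
  "quad_form I M x = (\<Sum>a\<in>I. \<Sum>b\<in>I. x a * M a b * x b)"

definition psd_on :: "'a set \<Rightarrow> ('a \<Rightarrow> 'a \<Rightarrow> real) \<Rightarrow> bool" where
  "psd_on I M \<longleftrightarrow> (\<forall>a\<in>I. \<forall>b\<in>I. M a b = M b a) \<and> (\<forall>x. 0 \<le> quad_form I M x)"

lemma psd_on_sym: "psd_on I M \<Longrightarrow> \<forall>a\<in>I. \<forall>b\<in>I. M a b = M b a"
  by (simp add: psd_on_def)

lemma psd_on_quad_form_nonneg: "psd_on I M \<Longrightarrow> 0 \<le> quad_form I M x"
  by (simp add: psd_on_def)

lemma quad_form_add_unit:
  assumes "finite I" "i \<in> I" "\<forall>a\<in>I. \<forall>b\<in>I. M a b = M b a"
  shows "quad_form I M (\<lambda>a. x a + (if a = i then t else 0))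
       = quad_form I M x + 2 * t * (\<Sum>a\<in>I. x a * M a i) + t\<^sup>2 * M i i"
proof -
  let ?e = "\<lambda>a. if a = i then t else 0"
  have expand: "(x a + ?e a) * M a b * (x b + ?e b) =
      x a * M a b * x b + x a * M a b * ?e b + ?e a * M a b * x b + ?e a * M a b * ?e b" for a b
    by (simp add: algebra_simps)
  have cross: "(\<Sum>a\<in>I. \<Sum>b\<in>I. y a * M a b * ?e b) = t * (\<Sum>a\<in>I. y a * M a i)" for y
    using assms(1,2) by (simp add: if_distrib sum_distrib_left mult_ac cong: if_cong)
  have "(\<Sum>a\<in>I. \<Sum>b\<in>I. ?e a * M a b * x b) = (\<Sum>b\<in>I. \<Sum>a\<in>I. x b * M b a * ?e a)"
    by (subst sum.swap) (intro sum.cong refl, metis assms(3) mult.commute mult.left_commute)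
  moreover have "(\<Sum>a\<in>I. ?e a * M a i) = t * M i i"
    using assms(1,2) by (simp add: if_distrib if_distribR cong: if_cong)
  ultimately show ?thesis
    by (simp add: quad_form_def expand sum.distrib cross power2_eq_square)
qed

lemma psd_on_diag_nonneg:
  assumes "finite I" "psd_on I M" "i \<in> I"
  shows "0 \<le> M i i"
  using psd_on_quad_form_nonneg[OF assms(2), of "\<lambda>a. 0 + (if a = i then 1 else 0)"]
    quad_form_add_unit[OF assms(1,3) psd_on_sym[OF assms(2)], where x = "\<lambda>_. 0" and t = 1]
  by (simp add: quad_form_def)

lemma psd_on_zero_diag_column:
  assumes "finite I" "psd_on I M" "i \<in> I" "M i i = 0" "b \<in> I"
  shows "M b i = 0"
proof (rule ccontr)
  assume nz: "M b i \<noteq> 0"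
  define x where "x = (\<lambda>a. if a = b then 1 else (0::real))"
  define t where "t = - (quad_form I M x + 1) / (2 * M b i)"
  have "(\<Sum>a\<in>I. x a * M a i) = M b i"
    using assms(1,5) by (simp add: x_def if_distrib if_distribR cong: if_cong)
  then have "quad_form I M (\<lambda>a. x a + (if a = i then t else 0)) = quad_form I M x + 2 * t * M b i"
    using quad_form_add_unit[OF assms(1,3) psd_on_sym[OF assms(2)], where x = x and t = t] assms(4)
    by simp
  also have "\<dots> = -1"
    using nz by (simp add: t_def field_simps)
  finally show False
    using psd_on_quad_form_nonneg[OF assms(2), of "\<lambda>a. x a + (if a = i then t else 0)"] by simp
qed

lemma psd_on_subset:
  assumes "finite I" "F \<subseteq> I" "psd_on I M"
  shows "psd_on F M"
  unfolding psd_on_def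
proof (intro conjI allI)
  show "\<forall>a\<in>F. \<forall>b\<in>F. M a b = M b a"
    using assms(2,3) by (auto simp: psd_on_def)
  fix x
  have "quad_form F M x = quad_form I M (\<lambda>a. if a \<in> F then x a else 0)"
    unfolding quad_form_def using assms(1,2)
    by (intro sum.mono_neutral_cong_left ballI) (auto simp: finite_subset intro!: sum.neutral)
  then show "0 \<le> quad_form F M x"
    using psd_on_quad_form_nonneg[OF assms(3)] by simp
qed

definition schur_compl :: "('a \<Rightarrow> 'a \<Rightarrow> real) \<Rightarrow> 'a \<Rightarrow> 'a \<Rightarrow> 'a \<Rightarrow> real" where
  "schur_compl M i = (\<lambda>a b. M a b - M a i * M i b / M i i)"

lemma schur_compl_zero:
  assumes "finite I" "psd_on I M" "i \<in> I" "a \<in> I"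
  shows "schur_compl M i a i = 0" "schur_compl M i i a = 0"
proof -
  have "M a i = 0 \<and> M i a = 0" if "M i i = 0"
    using psd_on_zero_diag_column[OF assms(1-3) that assms(4)] psd_on_sym[OF assms(2)] assms(3,4)
    by simp
  then show "schur_compl M i a i = 0" "schur_compl M i i a = 0"
    by (auto simp: schur_compl_def)
qed

lemma psd_on_schur_compl:
  assumes "finite I" "psd_on I M" "i \<in> I"
  shows "psd_on I (schur_compl M i)"
  unfolding psd_on_def
proof (intro conjI allI ballI)
  fix a b assume "a \<in> I" "b \<in> I"
  then show "schur_compl M i a b = schur_compl M i b a"
    using psd_on_sym[OF assms(2)] assms(3) by (simp add: schur_compl_def mult.commute)
next
  fix x
  let ?m = "M i i" and ?s = "\<Sum>a\<in>I. x a * M a i"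
  show "0 \<le> quad_form I (schur_compl M i) x"
  proof (cases "?m = 0")
    case True
    \<comment> \<open>division by zero yields 0, so the Schur complement is M itself\<close>
    then show ?thesis
      using psd_on_quad_form_nonneg[OF assms(2)] by (simp add: schur_compl_def)
  next
    case False
    have row: "(\<Sum>b\<in>I. M i b * x b) = ?s"
      using psd_on_sym[OF assms(2)] assms(3) by (intro sum.cong) (auto simp: mult.commute)
    have "quad_form I (schur_compl M i) x
        = quad_form I M x - (\<Sum>a\<in>I. \<Sum>b\<in>I. x a * M a i * (M i b * x b) / ?m)"
      by (simp add: quad_form_def schur_compl_def algebra_simps sum_subtractf)
    also have "\<dots> = quad_form I M x - ?s * (\<Sum>b\<in>I. M i b * x b) / ?m"
      by (simp add: sum_product sum_divide_distrib)
    also have "\<dots> = quad_form I M x - ?s * ?s / ?m"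
      by (simp only: row)
    also have "\<dots> = quad_form I M (\<lambda>a. x a + (if a = i then - ?s / ?m else 0))"
      using quad_form_add_unit[OF assms(1,3) psd_on_sym[OF assms(2)], where x = x and t = "- ?s / ?m"]
        False by (simp add: power2_eq_square field_simps)
    finally show ?thesis
      using psd_on_quad_form_nonneg[OF assms(2)] by simp
  qed
qed

lemma gram_psd_on:
  assumes "\<forall>a\<in>I. \<forall>b\<in>I. M a b = (\<Sum>t\<in>T. v t a * v t b)"
  shows "psd_on I M"
  unfolding psd_on_def
proof (intro conjI allI)
  show "\<forall>a\<in>I. \<forall>b\<in>I. M a b = M b a"
    using assms by (simp add: mult.commute)
  fix x
  have "quad_form I M x = (\<Sum>a\<in>I. \<Sum>b\<in>I. \<Sum>t\<in>T. (x a * v t a) * (x b * v t b))"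
    unfolding quad_form_def using assms
    by (intro sum.cong refl) (simp add: sum_distrib_left sum_distrib_right mult_ac)
  also have "\<dots> = (\<Sum>a\<in>I. \<Sum>t\<in>T. \<Sum>b\<in>I. (x a * v t a) * (x b * v t b))"
    by (intro sum.cong refl sum.swap)
  also have "\<dots> = (\<Sum>t\<in>T. (\<Sum>a\<in>I. x a * v t a) * (\<Sum>b\<in>I. x b * v t b))"
    by (subst sum.swap) (simp add: sum_product)
  also have "\<dots> \<ge> 0"
    by (intro sum_nonneg) simp
  finally show "0 \<le> quad_form I M x" .
qed

lemma psd_on_gram_decomposition:
  assumes "finite I" "psd_on I M"
  shows "\<exists>v. \<forall>a\<in>I. \<forall>b\<in>I. M a b = (\<Sum>t\<in>I. v t a * v t b)"
  using assms
proof (induction I arbitrary: M rule: finite_induct)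
  case empty
  then show ?case by simp
next
  case (insert i F)
  let ?J = "insert i F" and ?S = "schur_compl M i"
  have psdS: "psd_on ?J ?S"
    by (rule psd_on_schur_compl[OF _ insert.prems]) (simp_all add: insert.hyps)
  have "psd_on F ?S"
    by (rule psd_on_subset[OF _ _ psdS]) (auto simp: insert.hyps)
  then obtain v where v: "\<forall>a\<in>F. \<forall>b\<in>F. ?S a b = (\<Sum>t\<in>F. v t a * v t b)"
    using insert.IH by blast
  define w where "w t a = (if t = i then M a i / sqrt (M i i) else if a \<in> F then v t a else 0)"
    for t a
  have wF: "w t c = (if c \<in> F then v t c else 0)" if "t \<in> F" for t c
    using that insert.hyps by (auto simp: w_def)
  have "M a b = (\<Sum>t\<in>?J. w t a * w t b)" if "a \<in> ?J" "b \<in> ?J" for a b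
  proof -
    have "0 \<le> M i i"
      using psd_on_diag_nonneg[OF _ insert.prems] insert.hyps by simp
    moreover have "M b i = M i b"
      using psd_on_sym[OF insert.prems] that by auto
    ultimately have "w i a * w i b = M a i * M i b / M i i"
      by (simp add: w_def real_sqrt_mult_self)
    moreover have "(\<Sum>t\<in>F. w t a * w t b) = ?S a b"
    proof (cases "a \<in> F \<and> b \<in> F")
      case True
      then show ?thesis
        using v by (simp add: wF cong: sum.cong_simp)
    next
      case False
      then have "a = i \<or> b = i"
        using that by blast
      then show ?thesis
        using schur_compl_zero[OF _ insert.prems] that insert.hyps
        by (auto simp: wF cong: sum.cong_simp)
    qed
    ultimately show ?thesis
      using insert.hyps by (simp add: schur_compl_def)
  qed
  then show ?case by (intro exI[of _ w]) auto
qed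

lemma frobenius_psd_on_nonneg:
  assumes "finite I" "psd_on I M" "psd_on I N"
  shows "0 \<le> (\<Sum>a\<in>I. \<Sum>b\<in>I. M a b * N a b)"
proof -
  obtain v where v: "\<forall>a\<in>I. \<forall>b\<in>I. M a b = (\<Sum>t\<in>I. v t a * v t b)"
    using psd_on_gram_decomposition[OF assms(1,2)] by blast
  have "(\<Sum>a\<in>I. \<Sum>b\<in>I. M a b * N a b) = (\<Sum>a\<in>I. \<Sum>b\<in>I. \<Sum>t\<in>I. v t a * N a b * v t b)"
    using v by (intro sum.cong refl) (simp add: sum_distrib_left sum_distrib_right mult_ac)
  also have "\<dots> = (\<Sum>a\<in>I. \<Sum>t\<in>I. \<Sum>b\<in>I. v t a * N a b * v t b)"
    by (intro sum.cong refl sum.swap)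
  also have "\<dots> = (\<Sum>t\<in>I. quad_form I N (v t))"
    unfolding quad_form_def by (rule sum.swap)
  also have "\<dots> \<ge> 0"
    using psd_on_quad_form_nonneg[OF assms(3)] by (simp add: sum_nonneg)
  finally show ?thesis .
qed

lemma sum_mod_shift:
  fixes f :: "nat \<Rightarrow> 'a::comm_monoid_add"
  assumes "0 < p" "l \<le> p"
  shows "(\<Sum>d<p. f ((d + l) mod p)) = (\<Sum>d<p. f d)"
proof (rule sum.reindex_bij_witness[where i = "\<lambda>d. (d + (p - l)) mod p"
      and j = "\<lambda>d. (d + l) mod p"])
  fix d assume "d \<in> {..<p}"
  moreover have "d + (p - l) + l = d + p" "d + l + (p - l) = d + p"
    using assms(2) by simp_all
  ultimately show "((d + (p - l)) mod p + l) mod p = d" "((d + l) mod p + (p - l)) mod p = d"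
    by (simp_all only: mod_add_left_eq) simp_all
qed (use assms(1) in auto)

lemma sum_lessThan_mult_split:
  fixes f :: "nat \<Rightarrow> 'a::comm_monoid_add"
  shows "(\<Sum>s<n * p. f s) = (\<Sum>j<n. \<Sum>l<p. f (l * n + j))"
proof -
  have "(\<Sum>s<n * p. f s) = (\<Sum>l<p. \<Sum>s\<in>{l * n..<l * n + n}. f s)"
    by (simp add: sum.nat_group mult.commute)
  also have "\<dots> = (\<Sum>l<p. \<Sum>j<n. f (l * n + j))"
    using sum.shift_bounds_nat_ivl[of f 0 "l * n" n for l] by (simp add: atLeast0LessThan add.commute)
  finally show ?thesis
    by (subst sum.swap)
qed

lemma add_sub_mod_eq:
  fixes k l p :: nat
  assumes "k \<le> l" "l < p"
  shows "(l + p - k) mod p = l - k"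
  by (metis assms less_imp_diff_less mod_add_self2 mod_less
    ordered_cancel_comm_monoid_diff_class.add_diff_assoc2)

lemma mod_neg_add_sub:
  fixes k l p :: nat
  assumes "k < p" "l < p"
  shows "(p - (l + p - k) mod p) mod p = (k + p - l) mod p"
proof (cases "k \<le> l")
  case True
  then show ?thesis
    using assms by (cases "k = l") (simp_all add: add_sub_mod_eq)
next
  case False
  then show ?thesis
    using assms by (simp add: add_sub_mod_eq)
qed

(* bcirc A with row k * n + i and column l * n + j renamed to (i, k) and (j, l) *)
definition circ_mat :: "nat \<Rightarrow> tensor \<Rightarrow> nat \<times> nat \<Rightarrow> nat \<times> nat \<Rightarrow> real" where
  "circ_mat p A = (\<lambda>(i, k) (j, l). A i j ((k + p - l) mod p))"

definition tvec :: "tensor \<Rightarrow> nat \<times> nat \<Rightarrow> real" where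
  "tvec X = (\<lambda>(i, k). X i 0 k)"

lemma tprod_vector_entry:
  assumes "i < n" "k < p"
  shows "tprod n n 1 p A X i 0 k = (\<Sum>j<n. \<Sum>l<p. A i j ((k + p - l) mod p) * X j 0 l)"
proof -
  have block: "l * n + j < n * p" if "j < n" "l < p" for j l
  proof -
    have "l * n + j < (l + 1) * n" using that by simp
    also have "\<dots> \<le> p * n" using that by (intro mult_right_mono) auto
    finally show ?thesis by (simp add: mult.commute)
  qed
  have "tprod n n 1 p A X i 0 k = (\<Sum>s<n * p. bcirc n n p A (k * n + i) s * unfold n 1 p X s 0)"
    using assms by (simp add: tprod_def fold_def matmul_def)
  also have "\<dots> = (\<Sum>j<n. \<Sum>l<p.
      bcirc n n p A (k * n + i) (l * n + j) * unfold n 1 p X (l * n + j) 0)"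
    by (rule sum_lessThan_mult_split)
  also have "\<dots> = (\<Sum>j<n. \<Sum>l<p. A i j ((k + p - l) mod p) * X j 0 l)"
    using assms block[OF assms] block by (intro sum.cong refl) (simp add: bcirc_def unfold_def)
  finally show ?thesis .
qed

lemma tinner_tprod_eq_quad_form:
  "tinner n 1 p X (tprod n n 1 p A X) = quad_form ({..<n} \<times> {..<p}) (circ_mat p A) (tvec X)"
proof -
  have "tinner n 1 p X (tprod n n 1 p A X) = (\<Sum>i<n. \<Sum>k<p. X i 0 k * tprod n n 1 p A X i 0 k)"
    by (simp add: tinner_def)
  also have "\<dots> = (\<Sum>i<n. \<Sum>k<p. \<Sum>j<n. \<Sum>l<p. X i 0 k * A i j ((k + p - l) mod p) * X j 0 l)"
    by (intro sum.cong refl) (simp add: tprod_vector_entry[simplified] sum_distrib_left mult.assoc)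
  also have "\<dots> = quad_form ({..<n} \<times> {..<p}) (circ_mat p A) (tvec X)"
    by (simp add: quad_form_def circ_mat_def tvec_def sum.cartesian_product')
  finally show ?thesis .
qed

lemma circ_mat_sym:
  assumes "0 < p" "A \<in> symT n p"
  shows "\<forall>a\<in>{..<n} \<times> {..<p}. \<forall>b\<in>{..<n} \<times> {..<p}. circ_mat p A a b = circ_mat p A b a"
proof clarsimp
  fix i k j l assume "i < n" "k < p" "j < n" "l < p"
  then have "A j i ((l + p - k) mod p) = ttrans n n p A j i ((l + p - k) mod p)"
    using assms(2) by (simp add: symT_def)
  also have "\<dots> = A i j ((k + p - l) mod p)"
    using \<open>i < n\<close> \<open>j < n\<close> \<open>k < p\<close> \<open>l < p\<close> assms(1)
    by (simp add: ttrans_def mod_neg_add_sub)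
  finally show "circ_mat p A (i, k) (j, l) = circ_mat p A (j, l) (i, k)"
    by (simp add: circ_mat_def)
qed

lemma psdT_iff_psd_on:
  assumes "0 < p"
  shows "A \<in> psdT n p \<longleftrightarrow> A \<in> symT n p \<and> psd_on ({..<n} \<times> {..<p}) (circ_mat p A)"
proof
  assume A: "A \<in> psdT n p"
  then have sym: "A \<in> symT n p"
    by (simp add: psdT_def)
  have "0 \<le> quad_form ({..<n} \<times> {..<p}) (circ_mat p A) x" for x
  proof -
    define X :: tensor where "X = (\<lambda>i j k. if i < n \<and> j = 0 \<and> k < p then x (i, k) else 0)"
    have "quad_form ({..<n} \<times> {..<p}) (circ_mat p A) x
        = quad_form ({..<n} \<times> {..<p}) (circ_mat p A) (tvec X)"
      unfolding quad_form_def by (intro sum.cong refl) (auto simp: X_def tvec_def)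
    also have "\<dots> = tinner n 1 p X (tprod n n 1 p A X)"
      by (rule tinner_tprod_eq_quad_form[symmetric])
    also have "\<dots> \<ge> 0"
      using A by (simp add: psdT_def tvalid_def X_def)
    finally show ?thesis .
  qed
  then show "A \<in> symT n p \<and> psd_on ({..<n} \<times> {..<p}) (circ_mat p A)"
    using sym circ_mat_sym[OF assms sym] by (simp add: psd_on_def)
next
  assume "A \<in> symT n p \<and> psd_on ({..<n} \<times> {..<p}) (circ_mat p A)"
  then show "A \<in> psdT n p"
    unfolding psdT_def psd_on_def tinner_tprod_eq_quad_form by blast
qed

lemma frobenius_circ_mat:
  assumes "0 < p"
  shows "(\<Sum>a\<in>{..<n} \<times> {..<p}. \<Sum>b\<in>{..<n} \<times> {..<p}. circ_mat p A a b * circ_mat p B a b)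
    = real p * tinner n n p A B"
proof -
  have shift: "(\<Sum>k<p. A i j ((k + p - l) mod p) * B i j ((k + p - l) mod p))
      = (\<Sum>d<p. A i j d * B i j d)" if "l < p" for i j l
    using sum_mod_shift[OF assms, of "p - l" "\<lambda>d. A i j d * B i j d"] that by simp
  have "(\<Sum>a\<in>{..<n} \<times> {..<p}. \<Sum>b\<in>{..<n} \<times> {..<p}. circ_mat p A a b * circ_mat p B a b)
      = (\<Sum>i<n. \<Sum>k<p. \<Sum>j<n. \<Sum>l<p. A i j ((k + p - l) mod p) * B i j ((k + p - l) mod p))"
    by (simp add: circ_mat_def sum.cartesian_product')
  also have "\<dots> = (\<Sum>i<n. \<Sum>j<n. \<Sum>l<p. \<Sum>k<p. A i j ((k + p - l) mod p) * B i j ((k + p - l) mod p))"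
    by (rule sum.cong[OF refl], subst sum.swap, rule sum.cong[OF refl], rule sum.swap)
  also have "\<dots> = (\<Sum>i<n. \<Sum>j<n. \<Sum>l<p. \<Sum>d<p. A i j d * B i j d)"
    by (simp add: shift cong: sum.cong_simp)
  also have "\<dots> = real p * tinner n n p A B"
    by (simp add: tinner_def sum_distrib_left)
  finally show ?thesis .
qed

(* the T-product X * X\<^sup>T of an n x 1 x p tensor with its transpose *)
definition touter :: "nat \<Rightarrow> nat \<Rightarrow> tensor \<Rightarrow> tensor" where
  "touter n p X = (\<lambda>i j d. if i < n \<and> j < n \<and> d < p
      then (\<Sum>m<p. X i 0 ((m + d) mod p) * X j 0 m) else 0)"

lemma touter_symT:
  assumes "0 < p"
  shows "touter n p X \<in> symT n p"
proof -
  have "ttrans n n p (touter n p X) i j d = touter n p X i j d" for i j d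
  proof (cases "i < n \<and> j < n \<and> d < p")
    case True
    then have "ttrans n n p (touter n p X) i j d
        = (\<Sum>m<p. X j 0 ((m + (p - d) mod p) mod p) * X i 0 m)"
      using assms by (simp add: ttrans_def touter_def)
    also have "\<dots> = (\<Sum>e<p. X j 0 (((e + d) mod p + (p - d) mod p) mod p) * X i 0 ((e + d) mod p))"
      using True sum_mod_shift[OF assms, of d "\<lambda>m. X j 0 ((m + (p - d) mod p) mod p) * X i 0 m"] by simp
    also have "\<dots> = touter n p X i j d"
      using True by (simp add: touter_def mod_add_eq mult.commute)
    finally show ?thesis .
  qed (auto simp: ttrans_def touter_def)
  then have "ttrans n n p (touter n p X) = touter n p X"
    by (intro ext)
  then show ?thesis
    by (simp add: symT_def tvalid_def touter_def)
qed

definition cyclic_shift :: "nat \<Rightarrow> tensor \<Rightarrow> nat \<Rightarrow> nat \<times> nat \<Rightarrow> real" where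
  "cyclic_shift p X t = (\<lambda>(i, k). X i 0 ((t + k) mod p))"

lemma circ_mat_touter:
  assumes "0 < p"
  shows "\<forall>a\<in>{..<n} \<times> {..<p}. \<forall>b\<in>{..<n} \<times> {..<p}.
    circ_mat p (touter n p X) a b = (\<Sum>t<p. cyclic_shift p X t a * cyclic_shift p X t b)"
proof (clarsimp simp: cyclic_shift_def)
  fix i k j l assume "i < n" "k < p" "j < n" "l < p"
  then have "circ_mat p (touter n p X) (i, k) (j, l)
      = (\<Sum>m<p. X i 0 ((m + (k + p - l) mod p) mod p) * X j 0 m)"
    using assms by (simp add: circ_mat_def touter_def)
  also have "\<dots> = (\<Sum>t<p. X i 0 (((t + l) mod p + (k + p - l) mod p) mod p) * X j 0 ((t + l) mod p))"
    using \<open>l < p\<close> sum_mod_shift[OF assms, of l "\<lambda>m. X i 0 ((m + (k + p - l) mod p) mod p) * X j 0 m"]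
    by simp
  also have "\<dots> = (\<Sum>t<p. X i 0 ((t + k) mod p) * X j 0 ((t + l) mod p))"
    using \<open>k < p\<close> \<open>l < p\<close> by (simp add: mod_add_eq flip: add.assoc)
  finally show "circ_mat p (touter n p X) (i, k) (j, l)
      = (\<Sum>t<p. X i 0 ((t + k) mod p) * X j 0 ((t + l) mod p))" .
qed

lemma touter_psdT:
  assumes "0 < p"
  shows "touter n p X \<in> psdT n p"
  using psdT_iff_psd_on[OF assms] touter_symT[OF assms] gram_psd_on[OF circ_mat_touter[OF assms]]
  by blast

lemma tinner_touter_eq_quad_form:
  assumes "0 < p"
  shows "quad_form ({..<n} \<times> {..<p}) (circ_mat p B) (tvec X) = tinner n n p (touter n p X) B"
proof -
  have shift: "(\<Sum>k<p. X i 0 k * B i j ((k + p - l) mod p) * X j 0 l)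
      = (\<Sum>d<p. X i 0 ((d + l) mod p) * B i j d * X j 0 l)" if "l < p" for i j l
    using that sum_mod_shift[OF assms, of l "\<lambda>k. X i 0 k * B i j ((k + p - l) mod p) * X j 0 l"]
    by (simp add: mod_add_left_eq add.assoc flip: Nat.add_diff_assoc)
  have "quad_form ({..<n} \<times> {..<p}) (circ_mat p B) (tvec X)
      = (\<Sum>i<n. \<Sum>k<p. \<Sum>j<n. \<Sum>l<p. X i 0 k * B i j ((k + p - l) mod p) * X j 0 l)"
    by (simp add: quad_form_def circ_mat_def tvec_def sum.cartesian_product')
  also have "\<dots> = (\<Sum>i<n. \<Sum>j<n. \<Sum>l<p. \<Sum>k<p. X i 0 k * B i j ((k + p - l) mod p) * X j 0 l)"
    by (rule sum.cong[OF refl], subst sum.swap, rule sum.cong[OF refl], rule sum.swap)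
  also have "\<dots> = (\<Sum>i<n. \<Sum>j<n. \<Sum>l<p. \<Sum>d<p. X i 0 ((d + l) mod p) * B i j d * X j 0 l)"
    by (simp add: shift cong: sum.cong_simp)
  also have "\<dots> = (\<Sum>i<n. \<Sum>j<n. \<Sum>d<p. \<Sum>l<p. X i 0 ((d + l) mod p) * B i j d * X j 0 l)"
    by (intro sum.cong refl sum.swap)
  also have "\<dots> = tinner n n p (touter n p X) B"
    by (simp add: tinner_def touter_def sum_distrib_left sum_distrib_right mult_ac add.commute)
  finally show ?thesis .
qed

lemma psdT_subset_dualT:
  assumes "0 < p"
  shows "psdT n p \<subseteq> dualT n p (psdT n p)"
proof
  fix A assume A: "A \<in> psdT n p"
  have "0 \<le> tinner n n p C A" if "C \<in> psdT n p" for C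
  proof -
    have "0 \<le> real p * tinner n n p C A"
      using frobenius_psd_on_nonneg[of "{..<n} \<times> {..<p}" "circ_mat p C" "circ_mat p A"]
        frobenius_circ_mat[OF assms] psdT_iff_psd_on[OF assms] A that by auto
    then show ?thesis
      using assms by (simp add: zero_le_mult_iff)
  qed
  then show "A \<in> dualT n p (psdT n p)"
    using A by (simp add: dualT_def psdT_def)
qed

lemma dualT_subset_psdT:
  assumes "0 < p"
  shows "dualT n p (psdT n p) \<subseteq> psdT n p"
proof
  fix B assume B: "B \<in> dualT n p (psdT n p)"
  have "0 \<le> tinner n 1 p X (tprod n n 1 p B X)" for X
    unfolding tinner_tprod_eq_quad_form tinner_touter_eq_quad_form[OF assms]
    using B touter_psdT[OF assms] by (simp add: dualT_def)
  then show "B \<in> psdT n p"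
    using B unfolding dualT_def psdT_def by blast
qed

theorem mainTheorem12:
  fixes n p :: nat
  assumes "n \<ge> 1" and "p \<ge> 1"
  shows "psdT n p = dualT n p (psdT n p)"
  using psdT_subset_dualT dualT_subset_psdT assms(2) by (simp add: subset_antisym)

end
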